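(* Let $\omega:\Gamma^2\to\Gamma$ be a surjective group morphism. Then $G(\mathrm{ad}(h)\circ\omega)\cong G(\omega)$ for all $h\in\Gamma$.
   Context: $\mathrm{ad}(h)(g)=hgh^{-1}$. $\{0,1\}^*$ denotes the finite words over $\{0,1\}$; $\mathfrak C=\{0,1\}^{\mathbb N}$. A finite complete prefix code is a finite set $\{t_1,\dots,t_n\}\subset\{0,1\}^*$ such that every $x\in\mathfrak C$ has exactly one $t_i$ as prefix. Thompson's group $V$ is the group of homeomorphisms $v$ of $\mathfrak C$ for which there exist finite complete prefix codes $\{t_i\},\{s_i\}$ and a permutation $\sigma$ with $v(t_iw)=s_{\sigma(i)}w$. For a group morphism $\omega:\Gamma^2\to\Gamma$, $K(\omega)$ is the group of maps $a:\{0,1\}^*\to\Gamma$ (pointwise product) with $a(u)=\omega(a(u0),a(u1))$ for all $u$; $V$ acts on it by $\pi(v)(a)(s_{\sigma(i)}u)=a(t_iu)$ for all $i$, $u$ (determining $\pi(v)(a)\in K(\omega)$ uniquely); $G(\omega):=K(\omega)\rtimes V$ with $vav^{-1}=\pi(v)(a)$. *)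

theory Defs
  imports "HOL-Algebra.Group"
begin

text \<open>Finite words over {0,1} are \<open>bool list\<close> (False = 0, True = 1);
  the Cantor space is \<open>nat \<Rightarrow> bool\<close>.\<close>

definition is_prefix_of :: "bool list \<Rightarrow> (nat \<Rightarrow> bool) \<Rightarrow> bool" where
  "is_prefix_of t x \<longleftrightarrow> (\<forall>i<length t. x i = t ! i)"

definition cat :: "bool list \<Rightarrow> (nat \<Rightarrow> bool) \<Rightarrow> (nat \<Rightarrow> bool)" where
  "cat t w = (\<lambda>i. if i < length t then t ! i else w (i - length t))"

definition complete_prefix_code :: "bool list set \<Rightarrow> bool" where
  "complete_prefix_code T \<longleftrightarrow> finite T \<and> (\<forall>x. \<exists>!t. t \<in> T \<and> is_prefix_of t x)"

definition V_descr ::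
  "((nat \<Rightarrow> bool) \<Rightarrow> (nat \<Rightarrow> bool)) \<Rightarrow> bool list list \<Rightarrow> bool list list \<Rightarrow> (nat \<Rightarrow> nat) \<Rightarrow> bool" where
  "V_descr v ts ss \<sigma> \<longleftrightarrow>
     length ts = length ss \<and> distinct ts \<and> distinct ss \<and>
     complete_prefix_code (set ts) \<and> complete_prefix_code (set ss) \<and>
     bij_betw \<sigma> {..<length ts} {..<length ts} \<and>
     (\<forall>i<length ts. \<forall>w. v (cat (ts ! i) w) = cat (ss ! \<sigma> i) w)"

text \<open>Thompson's group V (its elements are homeomorphisms of the Cantor space;
  a map with such a description is automatically a homeomorphism).\<close>
definition thompsonV_set :: "((nat \<Rightarrow> bool) \<Rightarrow> (nat \<Rightarrow> bool)) set" where
  "thompsonV_set = {v. bij v \<and> (\<exists>ts ss \<sigma>. V_descr v ts ss \<sigma>)}"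

definition thompsonV :: "((nat \<Rightarrow> bool) \<Rightarrow> (nat \<Rightarrow> bool)) monoid" where
  "thompsonV = \<lparr>carrier = thompsonV_set, mult = (\<circ>), one = id\<rparr>"

definition K_set :: "('g, 'm) monoid_scheme \<Rightarrow> ('g \<times> 'g \<Rightarrow> 'g) \<Rightarrow> (bool list \<Rightarrow> 'g) set" where
  "K_set \<Gamma> \<omega> = {a. \<forall>u. a u \<in> carrier \<Gamma> \<and> a u = \<omega> (a (u @ [False]), a (u @ [True]))}"

definition K_grp :: "('g, 'm) monoid_scheme \<Rightarrow> ('g \<times> 'g \<Rightarrow> 'g) \<Rightarrow> (bool list \<Rightarrow> 'g) monoid" where
  "K_grp \<Gamma> \<omega> = \<lparr>carrier = K_set \<Gamma> \<omega>,
                  mult = (\<lambda>a b u. a u \<otimes>\<^bsub>\<Gamma>\<^esub> b u),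
                  one = (\<lambda>u. \<one>\<^bsub>\<Gamma>\<^esub>)\<rparr>"

definition V_act ::
  "('g, 'm) monoid_scheme \<Rightarrow> ('g \<times> 'g \<Rightarrow> 'g) \<Rightarrow> ((nat \<Rightarrow> bool) \<Rightarrow> (nat \<Rightarrow> bool))
     \<Rightarrow> (bool list \<Rightarrow> 'g) \<Rightarrow> (bool list \<Rightarrow> 'g)" where
  "V_act \<Gamma> \<omega> v a = (THE b. b \<in> K_set \<Gamma> \<omega> \<and>
      (\<forall>ts ss \<sigma>. V_descr v ts ss \<sigma> \<longrightarrow>
         (\<forall>i<length ts. \<forall>u. b (ss ! \<sigma> i @ u) = a (ts ! i @ u))))"

text \<open>G(\<omega>) = K(\<omega>) \<rtimes> V, with v a v\<inverse> = \<pi>(v)(a):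
  (a,v)(b,w) = (a \<cdot> \<pi>(v)(b), v \<circ> w).\<close>
definition G_grp :: "('g, 'm) monoid_scheme \<Rightarrow> ('g \<times> 'g \<Rightarrow> 'g)
     \<Rightarrow> ((bool list \<Rightarrow> 'g) \<times> ((nat \<Rightarrow> bool) \<Rightarrow> (nat \<Rightarrow> bool))) monoid" where
  "G_grp \<Gamma> \<omega> = \<lparr>carrier = K_set \<Gamma> \<omega> \<times> thompsonV_set,
                  mult = (\<lambda>(a, v) (b, w). (\<lambda>u. a u \<otimes>\<^bsub>\<Gamma>\<^esub> V_act \<Gamma> \<omega> v b u, v \<circ> w)),
                  one = (\<lambda>u. \<one>\<^bsub>\<Gamma>\<^esub>, id)\<rparr>"

definition ad :: "('g, 'm) monoid_scheme \<Rightarrow> 'g \<Rightarrow> 'g \<Rightarrow> 'g" where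
  "ad \<Gamma> h g = h \<otimes>\<^bsub>\<Gamma>\<^esub> g \<otimes>\<^bsub>\<Gamma>\<^esub> inv\<^bsub>\<Gamma>\<^esub> h"

end

theory Submission
  imports Defs
begin

(* Since \<omega> is onto, one can label the words by c(u) \<in> \<Gamma> with c(u) = h \<omega>(c(u0), c(u1)), choosing the
   labels from the root downwards.  For a in K(ad(h) \<circ> \<omega>) the map u \<mapsto> c(u)\<inverse> a(u) c(u) then lies in
   K(\<omega>).  To intertwine the two actions of V, the pair (a, v) is sent to (b, v) with
   b(y) = c(y)\<inverse> a(y) c(x) whenever v maps the cone of x onto the cone of y.  Such a b exists and is
   unique because an element of K(\<omega>) is determined by its values on all long enough words, and any
   coherent assignment on long words extends to the whole tree.  The inverse map uses c(y) b(y) c(x)\<inverse>. *)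

section \<open>Prefix replacements\<close>

lemma cat_append: "cat (x @ r) w = cat x (cat r w)"
  unfolding cat_def by (auto simp: nth_append fun_eq_iff)

lemma cat_eq_imp_eq:
  assumes "\<And>w. cat p w = cat q w"
  shows "p = q"
proof -
  have not_shorter: "\<not> length p < length q" if "\<And>w. cat p w = cat q w" for p q :: "bool list"
    using fun_cong[OF that[of "\<lambda>_. False"], of "length p"] fun_cong[OF that[of "\<lambda>_. True"], of "length p"]
    by (auto simp: cat_def)
  have "length p = length q"
    using not_shorter[of p q] not_shorter[of q p] assms by (metis linorder_neqE_nat)
  moreover have "p ! i = q ! i" if "i < length p" for i
    using fun_cong[OF assms[of "\<lambda>_. False"], of i] that \<open>length p = length q\<close> by (simp add: cat_def)
  ultimately show ?thesis by (rule nth_equalityI)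
qed

definition maps_cone :: "((nat \<Rightarrow> bool) \<Rightarrow> (nat \<Rightarrow> bool)) \<Rightarrow> bool list \<Rightarrow> bool list \<Rightarrow> bool" where
  "maps_cone v x y \<longleftrightarrow> (\<forall>w. v (cat x w) = cat y w)"

lemma maps_cone_append: "maps_cone v x y \<Longrightarrow> maps_cone v (x @ r) (y @ r)"
  unfolding maps_cone_def by (simp add: cat_append)

lemma maps_cone_comp: "maps_cone w x y \<Longrightarrow> maps_cone v y z \<Longrightarrow> maps_cone (v \<circ> w) x z"
  unfolding maps_cone_def by simp

lemma maps_cone_source_unique: "inj v \<Longrightarrow> maps_cone v x y \<Longrightarrow> maps_cone v x' y \<Longrightarrow> x = x'"
  unfolding maps_cone_def by (metis cat_eq_imp_eq injD)

(* The length bound makes the notion closed under composition. *)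
definition prefix_replacement :: "((nat \<Rightarrow> bool) \<Rightarrow> (nat \<Rightarrow> bool)) \<Rightarrow> bool" where
  "prefix_replacement v \<longleftrightarrow> inj v \<and>
     (\<exists>N. \<forall>z. N \<le> length z \<longrightarrow> (\<exists>y. maps_cone v y z \<and> length z \<le> length y + N))"

lemma prefix_replacement_inj: "prefix_replacement v \<Longrightarrow> inj v"
  unfolding prefix_replacement_def by blast

lemma prefix_replacement_cones:
  assumes "prefix_replacement v"
  obtains N where "\<And>z. N \<le> length z \<Longrightarrow> \<exists>y. maps_cone v y z \<and> length z \<le> length y + N"
  using assms unfolding prefix_replacement_def by blast

lemma prefix_replacement_comp:
  assumes "prefix_replacement v" "prefix_replacement w"
  shows "prefix_replacement (v \<circ> w)"
proof -
  obtain Nv where Nv: "\<And>z. Nv \<le> length z \<Longrightarrow> \<exists>y. maps_cone v y z \<and> length z \<le> length y + Nv"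
    using assms(1) by (rule prefix_replacement_cones) blast
  obtain Nw where Nw: "\<And>y. Nw \<le> length y \<Longrightarrow> \<exists>x. maps_cone w x y \<and> length y \<le> length x + Nw"
    using assms(2) by (rule prefix_replacement_cones) blast
  have "\<exists>x. maps_cone (v \<circ> w) x z \<and> length z \<le> length x + (Nv + Nw)" if z: "Nv + Nw \<le> length z" for z
  proof -
    obtain y where y: "maps_cone v y z" "length z \<le> length y + Nv" using Nv z by force
    then have "Nw \<le> length y" using z by linarith
    then obtain x where x: "maps_cone w x y" "length y \<le> length x + Nw" using Nw by blast
    show ?thesis using maps_cone_comp[OF x(1) y(1)] x(2) y(2) by force
  qed
  moreover have "inj (v \<circ> w)" using assms by (simp add: prefix_replacement_inj inj_compose)
  ultimately show ?thesis unfolding prefix_replacement_def by blast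
qed

lemma maps_cone_comp_split:
  assumes "prefix_replacement v" "prefix_replacement w"
  obtains N where
    "\<And>x z. N \<le> length z \<Longrightarrow> maps_cone (v \<circ> w) x z \<Longrightarrow> \<exists>y. maps_cone w x y \<and> maps_cone v y z"
proof -
  obtain Nv where Nv: "\<And>z. Nv \<le> length z \<Longrightarrow> \<exists>y. maps_cone v y z \<and> length z \<le> length y + Nv"
    using assms(1) by (rule prefix_replacement_cones) blast
  obtain Nw where Nw: "\<And>y. Nw \<le> length y \<Longrightarrow> \<exists>x. maps_cone w x y \<and> length y \<le> length x + Nw"
    using assms(2) by (rule prefix_replacement_cones) blast
  have "\<exists>y. maps_cone w x y \<and> maps_cone v y z"
    if z: "Nv + Nw \<le> length z" and xz: "maps_cone (v \<circ> w) x z" for x z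
  proof -
    obtain y where y: "maps_cone v y z" "length z \<le> length y + Nv" using Nv z by force
    then have "Nw \<le> length y" using z by linarith
    then obtain x' where x': "maps_cone w x' y" using Nw by blast
    have "x' = x"
      using maps_cone_source_unique[OF prefix_replacement_inj[OF prefix_replacement_comp[OF assms]]
          maps_cone_comp[OF x' y(1)] xz] .
    then show ?thesis using x' y(1) by blast
  qed
  then show thesis using that by blast
qed

lemma complete_prefix_code_prefix:
  assumes "complete_prefix_code T" "\<And>t. t \<in> T \<Longrightarrow> length t \<le> length z"
  obtains t r where "t \<in> T" "z = t @ r"
proof -
  obtain t where t: "t \<in> T" "is_prefix_of t (cat z (\<lambda>_. False))"
    using assms(1) unfolding complete_prefix_code_def by blast
  have "take (length t) z = t"
    using t assms(2)[OF t(1)] by (auto simp: is_prefix_of_def cat_def intro!: nth_equalityI)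
  then show thesis using that t(1) by (metis append_take_drop_id)
qed

lemma V_descr_maps_cone: "V_descr v ts ss \<sigma> \<Longrightarrow> i < length ts \<Longrightarrow> maps_cone v (ts ! i) (ss ! \<sigma> i)"
  unfolding V_descr_def maps_cone_def by simp

lemma V_descr_covers:
  assumes "V_descr v ts ss \<sigma>"
  obtains N where
    "\<And>z. N \<le> length z \<Longrightarrow> \<exists>i<length ts. \<exists>r. z = ss ! \<sigma> i @ r \<and> length (ss ! \<sigma> i) \<le> N"
proof -
  define N where "N = Max (length ` set ss)"
  have short: "length s \<le> N" if "s \<in> set ss" for s
    unfolding N_def using that by simp
  have code: "complete_prefix_code (set ss)" and lengths: "length ss = length ts"
    and onto: "\<sigma> ` {..<length ts} = {..<length ts}"
    using assms by (auto simp: V_descr_def bij_betw_def)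
  have "\<exists>i<length ts. \<exists>r. z = ss ! \<sigma> i @ r \<and> length (ss ! \<sigma> i) \<le> N" if z: "N \<le> length z" for z
  proof -
    have "length s \<le> length z" if "s \<in> set ss" for s
      using short[OF that] z by linarith
    with code obtain s r where s: "s \<in> set ss" "z = s @ r"
      by (rule complete_prefix_code_prefix)
    obtain j where j: "j < length ss" "ss ! j = s" using s(1) by (meson in_set_conv_nth)
    then have "j \<in> \<sigma> ` {..<length ts}" using onto lengths by simp
    then obtain i where "i < length ts" "\<sigma> i = j" by auto
    then show ?thesis using s j short[OF s(1)] by auto
  qed
  then show thesis using that by blast
qed

lemma thompsonV_prefix_replacement:
  assumes "v \<in> thompsonV_set"
  shows "prefix_replacement v"
proof -
  obtain ts ss \<sigma> where D: "V_descr v ts ss \<sigma>" and "bij v"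
    using assms unfolding thompsonV_set_def by blast
  obtain N where
    N: "\<And>z. N \<le> length z \<Longrightarrow> \<exists>i<length ts. \<exists>r. z = ss ! \<sigma> i @ r \<and> length (ss ! \<sigma> i) \<le> N"
    using D by (rule V_descr_covers) blast
  have "\<exists>y. maps_cone v y z \<and> length z \<le> length y + N" if z: "N \<le> length z" for z
  proof -
    obtain i r where "i < length ts" "z = ss ! \<sigma> i @ r" "length (ss ! \<sigma> i) \<le> N"
      using N z by blast
    then show ?thesis using maps_cone_append[OF V_descr_maps_cone[OF D]] by force
  qed
  then show ?thesis unfolding prefix_replacement_def using \<open>bij v\<close> bij_is_inj by blast
qed

section \<open>Coherent labellings of the binary tree\<close>

lemma K_set_carrier: "a \<in> K_set \<Gamma> \<omega> \<Longrightarrow> a u \<in> carrier \<Gamma>"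
  unfolding K_set_def by blast

lemma K_set_rec: "a \<in> K_set \<Gamma> \<omega> \<Longrightarrow> a u = \<omega> (a (u @ [False]), a (u @ [True]))"
  unfolding K_set_def by blast

lemma K_setI:
  "(\<And>u. a u \<in> carrier \<Gamma>) \<Longrightarrow> (\<And>u. a u = \<omega> (a (u @ [False]), a (u @ [True]))) \<Longrightarrow> a \<in> K_set \<Gamma> \<omega>"
  unfolding K_set_def by blast

lemma coherent_eq_if_eq_deep:
  assumes F: "\<And>u. F u = \<omega> (F (u @ [False]), F (u @ [True]))"
    and G: "\<And>u. G u = \<omega> (G (u @ [False]), G (u @ [True]))"
    and deep: "\<And>u. N \<le> length u \<Longrightarrow> F u = G u"
  shows "F u = G u"
proof -
  have "N \<le> length u + k \<Longrightarrow> F u = G u" for k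
  proof (induction k arbitrary: u)
    case 0
    then show ?case using deep by simp
  next
    case (Suc k)
    then have "F (u @ [b]) = G (u @ [b])" for b by simp
    then show ?case using F[of u] G[of u] by simp
  qed
  from this[of N] show ?thesis by simp
qed

lemma K_set_eqI_deep:
  assumes "a \<in> K_set \<Gamma> \<omega>" "b \<in> K_set \<Gamma> \<omega>" "\<And>u. N \<le> length u \<Longrightarrow> a u = b u"
  shows "a = b"
  by (rule ext, rule coherent_eq_if_eq_deep[OF K_set_rec[OF assms(1)] K_set_rec[OF assms(2)] assms(3)])

fun fill_up :: "('g \<times> 'g \<Rightarrow> 'g) \<Rightarrow> (bool list \<Rightarrow> 'g) \<Rightarrow> nat \<Rightarrow> bool list \<Rightarrow> 'g" where
  "fill_up \<omega> f 0 u = f u"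
| "fill_up \<omega> f (Suc k) u = \<omega> (fill_up \<omega> f k (u @ [False]), fill_up \<omega> f k (u @ [True]))"

lemma K_set_extend_deep:
  assumes closed: "\<omega> \<in> carrier \<Gamma> \<times> carrier \<Gamma> \<rightarrow> carrier \<Gamma>"
    and carrier: "\<And>u. N \<le> length u \<Longrightarrow> f u \<in> carrier \<Gamma>"
    and rec: "\<And>u. N \<le> length u \<Longrightarrow> f u = \<omega> (f (u @ [False]), f (u @ [True]))"
  obtains b where "b \<in> K_set \<Gamma> \<omega>" "\<And>u. N \<le> length u \<Longrightarrow> b u = f u"
proof -
  define b where "b u = fill_up \<omega> f (N - length u) u" for u
  have deep: "b u = f u" if "N \<le> length u" for u
    using that by (simp add: b_def)
  have "fill_up \<omega> f k u \<in> carrier \<Gamma>" if "N \<le> length u + k" for k u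
    using that closed by (induction k arbitrary: u) (auto simp: carrier)
  then have "b u \<in> carrier \<Gamma>" for u by (simp add: b_def)
  moreover have "b u = \<omega> (b (u @ [False]), b (u @ [True]))" for u
  proof (cases "N \<le> length u")
    case True
    then show ?thesis using rec[OF True] deep by simp
  next
    case False
    then have "N - length u = Suc (N - length (u @ [d]))" for d by simp
    then show ?thesis by (simp add: b_def)
  qed
  ultimately have "b \<in> K_set \<Gamma> \<omega>" by (rule K_setI)
  then show thesis using deep by (rule that)
qed

lemma K_set_mult_closed:
  fixes \<Gamma> (structure)
  assumes "group \<Gamma>" "\<omega> \<in> hom (\<Gamma> \<times>\<times> \<Gamma>) \<Gamma>" and a: "a \<in> K_set \<Gamma> \<omega>" and b: "b \<in> K_set \<Gamma> \<omega>"
  shows "(\<lambda>u. a u \<otimes> b u) \<in> K_set \<Gamma> \<omega>"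
proof (rule K_setI)
  interpret group \<Gamma> by fact
  note carrier = K_set_carrier[OF a] K_set_carrier[OF b]
  fix u
  show "a u \<otimes> b u \<in> carrier \<Gamma>" using carrier by simp
  have "a u \<otimes> b u = \<omega> (a (u @ [False]), a (u @ [True])) \<otimes> \<omega> (b (u @ [False]), b (u @ [True]))"
    using K_set_rec[OF a, of u] K_set_rec[OF b, of u] by simp
  also have "\<dots> = \<omega> ((a (u @ [False]), a (u @ [True])) \<otimes>\<^bsub>\<Gamma> \<times>\<times> \<Gamma>\<^esub> (b (u @ [False]), b (u @ [True])))"
    using hom_mult[OF assms(2), of "(a (u @ [False]), a (u @ [True]))" "(b (u @ [False]), b (u @ [True]))"]
      carrier by simp
  finally show "a u \<otimes> b u = \<omega> (a (u @ [False]) \<otimes> b (u @ [False]), a (u @ [True]) \<otimes> b (u @ [True]))"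
    by simp
qed

definition coherent_pairs :: "('g, 'm) monoid_scheme \<Rightarrow> ('g \<times> 'g \<Rightarrow> 'g) \<Rightarrow> (bool list \<Rightarrow> bool list \<Rightarrow> 'g) set" where
  "coherent_pairs \<Gamma> \<omega> = {g. \<forall>x y. g x y \<in> carrier \<Gamma> \<and>
      g x y = \<omega> (g (x @ [False]) (y @ [False]), g (x @ [True]) (y @ [True]))}"

lemma coherent_pairsI:
  "(\<And>x y. g x y \<in> carrier \<Gamma>) \<Longrightarrow>
   (\<And>x y. g x y = \<omega> (g (x @ [False]) (y @ [False]), g (x @ [True]) (y @ [True]))) \<Longrightarrow>
   g \<in> coherent_pairs \<Gamma> \<omega>"
  unfolding coherent_pairs_def by blast

lemma coherent_pairs_carrier: "g \<in> coherent_pairs \<Gamma> \<omega> \<Longrightarrow> g x y \<in> carrier \<Gamma>"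
  unfolding coherent_pairs_def by blast

lemma coherent_pairs_rec:
  "g \<in> coherent_pairs \<Gamma> \<omega> \<Longrightarrow> g x y = \<omega> (g (x @ [False]) (y @ [False]), g (x @ [True]) (y @ [True]))"
  unfolding coherent_pairs_def by blast

lemma K_set_coherent_pairs: "a \<in> K_set \<Gamma> \<omega> \<Longrightarrow> (\<lambda>x y. a x) \<in> coherent_pairs \<Gamma> \<omega>"
  by (intro coherent_pairsI K_set_carrier K_set_rec)

lemma K_set_eq_on_cones_if_deep:
  assumes b: "b \<in> K_set \<Gamma> \<omega>" and g: "g \<in> coherent_pairs \<Gamma> \<omega>" and xy: "maps_cone v x y"
    and deep: "\<And>x y. N \<le> length y \<Longrightarrow> maps_cone v x y \<Longrightarrow> b y = g x y"
  shows "b y = g x y"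
proof -
  have "b (y @ r) = g (x @ r) (y @ r)" for r
  proof (rule coherent_eq_if_eq_deep[where F = "\<lambda>r. b (y @ r)" and G = "\<lambda>r. g (x @ r) (y @ r)"
        and \<omega> = \<omega> and N = N])
    show "b (y @ u) = \<omega> (b (y @ u @ [False]), b (y @ u @ [True]))" for u
      using K_set_rec[OF b, of "y @ u"] by simp
    show "g (x @ u) (y @ u) = \<omega> (g (x @ u @ [False]) (y @ u @ [False]), g (x @ u @ [True]) (y @ u @ [True]))"
      for u
      using coherent_pairs_rec[OF g, of "x @ u" "y @ u"] by simp
    show "b (y @ u) = g (x @ u) (y @ u)" if "N \<le> length u" for u
      using deep[OF _ maps_cone_append[OF xy]] that by simp
  qed
  from this[of "[]"] show ?thesis by simp
qed

definition transport ::
  "('g, 'm) monoid_scheme \<Rightarrow> ('g \<times> 'g \<Rightarrow> 'g) \<Rightarrow> ((nat \<Rightarrow> bool) \<Rightarrow> (nat \<Rightarrow> bool))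
     \<Rightarrow> (bool list \<Rightarrow> bool list \<Rightarrow> 'g) \<Rightarrow> bool list \<Rightarrow> 'g" where
  "transport \<Gamma> \<omega> v g = (SOME b. b \<in> K_set \<Gamma> \<omega> \<and> (\<forall>x y. maps_cone v x y \<longrightarrow> b y = g x y))"

context
  fixes \<Gamma> :: "('g, 'm) monoid_scheme" and \<omega> :: "'g \<times> 'g \<Rightarrow> 'g"
    and v :: "(nat \<Rightarrow> bool) \<Rightarrow> (nat \<Rightarrow> bool)" and g :: "bool list \<Rightarrow> bool list \<Rightarrow> 'g"
  assumes closed: "\<omega> \<in> carrier \<Gamma> \<times> carrier \<Gamma> \<rightarrow> carrier \<Gamma>"
    and v: "prefix_replacement v"
    and g: "g \<in> coherent_pairs \<Gamma> \<omega>"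
begin

lemma transport_exists: "\<exists>b. b \<in> K_set \<Gamma> \<omega> \<and> (\<forall>x y. maps_cone v x y \<longrightarrow> b y = g x y)"
proof -
  obtain N where N: "\<And>z. N \<le> length z \<Longrightarrow> \<exists>y. maps_cone v y z \<and> length z \<le> length y + N"
    using v by (rule prefix_replacement_cones) blast
  define source where "source z = (SOME x. maps_cone v x z)" for z
  have source: "maps_cone v (source z) z" if "N \<le> length z" for z
  proof -
    have "\<exists>x. maps_cone v x z" using N[OF that] by blast
    then show ?thesis unfolding source_def by (rule someI_ex)
  qed
  have source_eq: "source z = x" if "maps_cone v x z" for x z
    unfolding source_def using that maps_cone_source_unique[OF prefix_replacement_inj[OF v]]
    by (blast intro: some_equality)
  define f where "f z = g (source z) z" for z
  have f_carrier: "f z \<in> carrier \<Gamma>" for z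
    unfolding f_def by (rule coherent_pairs_carrier[OF g])
  have f_rec: "f z = \<omega> (f (z @ [False]), f (z @ [True]))" if "N \<le> length z" for z
    using coherent_pairs_rec[OF g, of "source z" z] source_eq[OF maps_cone_append[OF source[OF that]]]
    by (simp add: f_def)
  obtain b where b: "b \<in> K_set \<Gamma> \<omega>" and b_deep: "\<And>z. N \<le> length z \<Longrightarrow> b z = f z"
    using K_set_extend_deep[OF closed f_carrier f_rec] by blast
  have "b y = g x y" if "maps_cone v x y" for x y
    using K_set_eq_on_cones_if_deep[OF b g that, where N = N] b_deep source_eq by (simp add: f_def)
  with b show ?thesis by blast
qed

lemma transport_in_K_set: "transport \<Gamma> \<omega> v g \<in> K_set \<Gamma> \<omega>"
  unfolding transport_def using someI_ex[OF transport_exists] by blast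

lemma transport_maps_cone: "maps_cone v x y \<Longrightarrow> transport \<Gamma> \<omega> v g y = g x y"
  unfolding transport_def using someI_ex[OF transport_exists] by blast

lemma transport_eqI:
  assumes "b \<in> K_set \<Gamma> \<omega>" and "\<And>x y. N \<le> length y \<Longrightarrow> maps_cone v x y \<Longrightarrow> b y = g x y"
  shows "transport \<Gamma> \<omega> v g = b"
proof -
  obtain M where M: "\<And>z. M \<le> length z \<Longrightarrow> \<exists>y. maps_cone v y z \<and> length z \<le> length y + M"
    using v by (rule prefix_replacement_cones) blast
  show ?thesis
  proof (rule K_set_eqI_deep[OF transport_in_K_set assms(1), where N = "max M N"])
    fix z :: "bool list"
    assume z: "max M N \<le> length z"
    then obtain x where "maps_cone v x z" using M by force
    then show "transport \<Gamma> \<omega> v g z = b z" using assms(2) transport_maps_cone z by simp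
  qed
qed

end

context
  fixes \<Gamma> :: "('g, 'm) monoid_scheme" and \<omega> :: "'g \<times> 'g \<Rightarrow> 'g"
    and v :: "(nat \<Rightarrow> bool) \<Rightarrow> (nat \<Rightarrow> bool)" and a :: "bool list \<Rightarrow> 'g"
  assumes closed: "\<omega> \<in> carrier \<Gamma> \<times> carrier \<Gamma> \<rightarrow> carrier \<Gamma>"
    and v: "v \<in> thompsonV_set"
    and a: "a \<in> K_set \<Gamma> \<omega>"
begin

lemma V_act_eq_transport: "V_act \<Gamma> \<omega> v a = transport \<Gamma> \<omega> v (\<lambda>x y. a x)"
proof -
  note transport_hyps = closed thompsonV_prefix_replacement[OF v] K_set_coherent_pairs[OF a]
  define T where "T = transport \<Gamma> \<omega> v (\<lambda>x y. a x)"
  have T_cone: "T y = a x" if "maps_cone v x y" for x y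
    unfolding T_def using transport_maps_cone[OF transport_hyps that] .
  show ?thesis
    unfolding V_act_def T_def[symmetric]
  proof (rule the_equality)
    show "T \<in> K_set \<Gamma> \<omega> \<and> (\<forall>ts ss \<sigma>. V_descr v ts ss \<sigma> \<longrightarrow>
        (\<forall>i<length ts. \<forall>u. T (ss ! \<sigma> i @ u) = a (ts ! i @ u)))"
      using transport_in_K_set[OF transport_hyps] T_cone maps_cone_append V_descr_maps_cone
      unfolding T_def by blast
  next
    fix b
    assume b: "b \<in> K_set \<Gamma> \<omega> \<and> (\<forall>ts ss \<sigma>. V_descr v ts ss \<sigma> \<longrightarrow>
        (\<forall>i<length ts. \<forall>u. b (ss ! \<sigma> i @ u) = a (ts ! i @ u)))"
    obtain ts ss \<sigma> where D: "V_descr v ts ss \<sigma>" using v unfolding thompsonV_set_def by blast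
    obtain N where
      N: "\<And>z. N \<le> length z \<Longrightarrow> \<exists>i<length ts. \<exists>r. z = ss ! \<sigma> i @ r \<and> length (ss ! \<sigma> i) \<le> N"
      using D by (rule V_descr_covers) blast
    have "T = b"
      unfolding T_def
    proof (rule transport_eqI[OF transport_hyps, where N = N])
      show "b \<in> K_set \<Gamma> \<omega>" using b by blast
      fix x y
      assume "N \<le> length y" "maps_cone v x y"
      moreover obtain i r where i: "i < length ts" "y = ss ! \<sigma> i @ r" using N \<open>N \<le> length y\<close> by blast
      ultimately have "x = ts ! i @ r"
        using maps_cone_source_unique[OF prefix_replacement_inj[OF thompsonV_prefix_replacement[OF v]]]
          maps_cone_append[OF V_descr_maps_cone[OF D i(1)]] by metis
      then show "b y = a x" using b D i by blast
    qed
    then show "b = T" by simp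
  qed
qed

lemma V_act_in_K_set: "V_act \<Gamma> \<omega> v a \<in> K_set \<Gamma> \<omega>"
  unfolding V_act_eq_transport
  using transport_in_K_set[OF closed thompsonV_prefix_replacement[OF v] K_set_coherent_pairs[OF a]] .

lemma V_act_maps_cone: "maps_cone v x y \<Longrightarrow> V_act \<Gamma> \<omega> v a y = a x"
  unfolding V_act_eq_transport
  using transport_maps_cone[OF closed thompsonV_prefix_replacement[OF v] K_set_coherent_pairs[OF a]] .

end

lemma carrier_G_grp [simp]: "carrier (G_grp \<Gamma> \<omega>) = K_set \<Gamma> \<omega> \<times> thompsonV_set"
  by (simp add: G_grp_def)

lemma mult_G_grp:
  "(a, v) \<otimes>\<^bsub>G_grp \<Gamma> \<omega>\<^esub> (b, w) = (\<lambda>u. a u \<otimes>\<^bsub>\<Gamma>\<^esub> V_act \<Gamma> \<omega> v b u, v \<circ> w)"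
  by (simp add: G_grp_def)

section \<open>Twisting by a labelling\<close>

lemma ad_comp_hom:
  fixes \<Gamma> (structure)
  assumes "group \<Gamma>" "\<omega> \<in> hom G \<Gamma>" "h \<in> carrier \<Gamma>"
  shows "ad \<Gamma> h \<circ> \<omega> \<in> hom G \<Gamma>"
proof -
  interpret group \<Gamma> by fact
  have "ad \<Gamma> h \<in> hom \<Gamma> \<Gamma>"
    using assms(3) by (intro homI) (simp_all add: ad_def m_assoc flip: m_assoc[of "inv h" h])
  with assms(2) show ?thesis by (rule Group.hom_compose)
qed

lemma twisting_labelling_exists:
  fixes \<Gamma> (structure)
  assumes "group \<Gamma>" "\<omega> ` carrier (\<Gamma> \<times>\<times> \<Gamma>) = carrier \<Gamma>" "h \<in> carrier \<Gamma>"
  obtains c where "\<And>u. c u \<in> carrier \<Gamma>" "\<And>u. c u = h \<otimes> \<omega> (c (u @ [False]), c (u @ [True]))"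
proof -
  interpret group \<Gamma> by fact
  define children where "children g = inv_into (carrier \<Gamma> \<times> carrier \<Gamma>) \<omega> (inv h \<otimes> g)" for g
  have children: "children g \<in> carrier \<Gamma> \<times> carrier \<Gamma>" "\<omega> (children g) = inv h \<otimes> g"
    if "g \<in> carrier \<Gamma>" for g
    using that assms(2,3) unfolding children_def by (auto intro: inv_into_into f_inv_into_f)
  define c where "c = foldl (\<lambda>g b. (if b then snd else fst) (children g)) \<one>"
  have c_snoc: "c (u @ [b]) = (if b then snd else fst) (children (c u))" for u b
    by (simp add: c_def)
  have c_carrier: "c u \<in> carrier \<Gamma>" for u
  proof (induction u rule: rev_induct)
    case Nil
    then show ?case by (simp add: c_def)
  next
    case (snoc b u)
    then show ?case using children(1)[OF snoc] by (simp add: c_snoc mem_Times_iff)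
  qed
  have "c u = h \<otimes> \<omega> (c (u @ [False]), c (u @ [True]))" for u
    using children(2)[OF c_carrier[of u]] c_carrier assms(3)
    by (simp add: c_snoc m_assoc[symmetric])
  with c_carrier show thesis by (rule that)
qed

locale twisting_labelling = group \<Gamma> for \<Gamma> :: "('g, 'm) monoid_scheme" (structure) +
  fixes \<omega> :: "'g \<times> 'g \<Rightarrow> 'g" and h :: 'g and c :: "bool list \<Rightarrow> 'g"
  assumes omega_hom: "\<omega> \<in> hom (\<Gamma> \<times>\<times> \<Gamma>) \<Gamma>"
    and h_carrier [simp]: "h \<in> carrier \<Gamma>"
    and c_carrier [simp]: "c u \<in> carrier \<Gamma>"
    and c_rec: "c u = h \<otimes> \<omega> (c (u @ [False]), c (u @ [True]))"
begin

abbreviation \<omega>' where "\<omega>' \<equiv> ad \<Gamma> h \<circ> \<omega>"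

lemma omega_closed [simp]: "p \<in> carrier \<Gamma> \<Longrightarrow> q \<in> carrier \<Gamma> \<Longrightarrow> \<omega> (p, q) \<in> carrier \<Gamma>"
  using hom_in_carrier[OF omega_hom] by simp

lemma omega_mult:
  "p \<in> carrier \<Gamma> \<Longrightarrow> q \<in> carrier \<Gamma> \<Longrightarrow> p' \<in> carrier \<Gamma> \<Longrightarrow> q' \<in> carrier \<Gamma> \<Longrightarrow>
   \<omega> (p \<otimes> p', q \<otimes> q') = \<omega> (p, q) \<otimes> \<omega> (p', q')"
  using hom_mult[OF omega_hom, of "(p, q)" "(p', q')"] by simp

lemma omega_inv:
  assumes "p \<in> carrier \<Gamma>" "q \<in> carrier \<Gamma>"
  shows "\<omega> (inv p, inv q) = inv \<omega> (p, q)"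
proof -
  interpret group_hom "\<Gamma> \<times>\<times> \<Gamma>" \<Gamma> \<omega>
    unfolding group_hom_def group_hom_axioms_def using omega_hom DirProd_group is_group by blast
  show ?thesis using hom_inv[of "(p, q)"] inv_DirProd[OF is_group is_group] assms by simp
qed

lemma omega_funcset: "\<omega> \<in> carrier \<Gamma> \<times> carrier \<Gamma> \<rightarrow> carrier \<Gamma>"
  using omega_hom unfolding hom_def by simp

lemma omega'_hom: "\<omega>' \<in> hom (\<Gamma> \<times>\<times> \<Gamma>) \<Gamma>"
  using ad_comp_hom[OF is_group omega_hom h_carrier] .

lemma omega'_funcset: "\<omega>' \<in> carrier \<Gamma> \<times> carrier \<Gamma> \<rightarrow> carrier \<Gamma>"
  using omega'_hom unfolding hom_def by simp

lemma K_set_omega'_rec: "a \<in> K_set \<Gamma> \<omega>' \<Longrightarrow> a u = h \<otimes> \<omega> (a (u @ [False]), a (u @ [True])) \<otimes> inv h"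
  using K_set_rec[of a \<Gamma> \<omega>' u] by (simp add: ad_def)

definition twist :: "(bool list \<Rightarrow> 'g) \<Rightarrow> bool list \<Rightarrow> bool list \<Rightarrow> 'g" where
  "twist a x y = inv (c y) \<otimes> a y \<otimes> c x"

definition untwist :: "(bool list \<Rightarrow> 'g) \<Rightarrow> bool list \<Rightarrow> bool list \<Rightarrow> 'g" where
  "untwist b x y = c y \<otimes> b y \<otimes> inv (c x)"

lemma twist_coherent_pairs:
  assumes a: "a \<in> K_set \<Gamma> \<omega>'"
  shows "twist a \<in> coherent_pairs \<Gamma> \<omega>"
proof (rule coherent_pairsI)
  note a_carrier [simp] = K_set_carrier[OF a]
  fix x y
  show "twist a x y \<in> carrier \<Gamma>" by (simp add: twist_def)
  let ?C = "\<lambda>u. \<omega> (c (u @ [False]), c (u @ [True]))" and ?A = "\<lambda>u. \<omega> (a (u @ [False]), a (u @ [True]))"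
  have "twist a x y = inv (h \<otimes> ?C y) \<otimes> (h \<otimes> ?A y \<otimes> inv h) \<otimes> (h \<otimes> ?C x)"
    unfolding twist_def by (simp flip: c_rec K_set_omega'_rec[OF a])
  also have "\<dots> = inv (?C y) \<otimes> ?A y \<otimes> ?C x"
    by (simp add: m_assoc inv_mult_group flip: m_assoc[of "inv h" h] m_assoc[of "inv h"])
  also have "\<dots> = \<omega> (twist a (x @ [False]) (y @ [False]), twist a (x @ [True]) (y @ [True]))"
    by (simp add: twist_def omega_mult omega_inv m_assoc)
  finally show "twist a x y = \<omega> (twist a (x @ [False]) (y @ [False]), twist a (x @ [True]) (y @ [True]))" .
qed

lemma untwist_coherent_pairs:
  assumes b: "b \<in> K_set \<Gamma> \<omega>"
  shows "untwist b \<in> coherent_pairs \<Gamma> \<omega>'"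
proof (rule coherent_pairsI)
  note b_carrier [simp] = K_set_carrier[OF b]
  fix x y
  show "untwist b x y \<in> carrier \<Gamma>" by (simp add: untwist_def)
  let ?C = "\<lambda>u. \<omega> (c (u @ [False]), c (u @ [True]))" and ?B = "\<lambda>u. \<omega> (b (u @ [False]), b (u @ [True]))"
  have "untwist b x y = (h \<otimes> ?C y) \<otimes> ?B y \<otimes> inv (h \<otimes> ?C x)"
    unfolding untwist_def by (simp flip: c_rec K_set_rec[OF b])
  also have "\<dots> = h \<otimes> (?C y \<otimes> ?B y \<otimes> inv (?C x)) \<otimes> inv h"
    by (simp add: m_assoc inv_mult_group)
  also have "\<dots> = \<omega>' (untwist b (x @ [False]) (y @ [False]), untwist b (x @ [True]) (y @ [True]))"
    by (simp add: untwist_def ad_def omega_mult omega_inv m_assoc)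
  finally show "untwist b x y = \<omega>' (untwist b (x @ [False]) (y @ [False]), untwist b (x @ [True]) (y @ [True]))" .
qed

definition twisting_map where
  "twisting_map = (\<lambda>(a, v). (transport \<Gamma> \<omega> v (twist a), v))"

definition untwisting_map where
  "untwisting_map = (\<lambda>(b, v). (transport \<Gamma> \<omega>' v (untwist b), v))"

lemma twisting_map_carrier:
  assumes "p \<in> carrier (G_grp \<Gamma> \<omega>')"
  shows "twisting_map p \<in> carrier (G_grp \<Gamma> \<omega>)"
proof -
  obtain a v where "p = (a, v)" "a \<in> K_set \<Gamma> \<omega>'" "v \<in> thompsonV_set" using assms by auto
  then show ?thesis
    using transport_in_K_set[OF omega_funcset thompsonV_prefix_replacement twist_coherent_pairs]
    by (simp add: twisting_map_def)
qed

lemma untwisting_map_carrier: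
  assumes "p \<in> carrier (G_grp \<Gamma> \<omega>)"
  shows "untwisting_map p \<in> carrier (G_grp \<Gamma> \<omega>')"
proof -
  obtain b v where "p = (b, v)" "b \<in> K_set \<Gamma> \<omega>" "v \<in> thompsonV_set" using assms by auto
  then show ?thesis
    using transport_in_K_set[OF omega'_funcset thompsonV_prefix_replacement untwist_coherent_pairs]
    by (simp add: untwisting_map_def)
qed

lemma untwisting_twisting_map:
  assumes "p \<in> carrier (G_grp \<Gamma> \<omega>')"
  shows "untwisting_map (twisting_map p) = p"
proof -
  obtain a v where p: "p = (a, v)" and a: "a \<in> K_set \<Gamma> \<omega>'" and v: "v \<in> thompsonV_set"
    using assms by auto
  note twisted = omega_funcset thompsonV_prefix_replacement[OF v] twist_coherent_pairs[OF a]
  define b where "b = transport \<Gamma> \<omega> v (twist a)"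
  have b: "b \<in> K_set \<Gamma> \<omega>" "\<And>x y. maps_cone v x y \<Longrightarrow> b y = twist a x y"
    unfolding b_def using transport_in_K_set[OF twisted] transport_maps_cone[OF twisted] by auto
  have "transport \<Gamma> \<omega>' v (untwist b) = a"
  proof (rule transport_eqI[OF omega'_funcset thompsonV_prefix_replacement[OF v]
        untwist_coherent_pairs[OF b(1)] a, where N = 0])
    fix x y
    assume "maps_cone v x y"
    then show "a y = untwist b x y"
      using K_set_carrier[OF a]
      by (simp add: b(2) untwist_def twist_def m_assoc flip: m_assoc[of "c y" "inv (c y)"])
  qed
  then show ?thesis using p by (simp add: twisting_map_def untwisting_map_def b_def)
qed

lemma twisting_untwisting_map:
  assumes "p \<in> carrier (G_grp \<Gamma> \<omega>)"
  shows "twisting_map (untwisting_map p) = p"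
proof -
  obtain b v where p: "p = (b, v)" and b: "b \<in> K_set \<Gamma> \<omega>" and v: "v \<in> thompsonV_set"
    using assms by auto
  note untwisted = omega'_funcset thompsonV_prefix_replacement[OF v] untwist_coherent_pairs[OF b]
  define a where "a = transport \<Gamma> \<omega>' v (untwist b)"
  have a: "a \<in> K_set \<Gamma> \<omega>'" "\<And>x y. maps_cone v x y \<Longrightarrow> a y = untwist b x y"
    unfolding a_def using transport_in_K_set[OF untwisted] transport_maps_cone[OF untwisted] by auto
  have "transport \<Gamma> \<omega> v (twist a) = b"
  proof (rule transport_eqI[OF omega_funcset thompsonV_prefix_replacement[OF v]
        twist_coherent_pairs[OF a(1)] b, where N = 0])
    fix x y
    assume "maps_cone v x y"
    then show "b y = twist a x y"
      using K_set_carrier[OF b]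
      by (simp add: a(2) untwist_def twist_def m_assoc flip: m_assoc[of "inv (c y)" "c y"])
  qed
  then show ?thesis using p by (simp add: twisting_map_def untwisting_map_def a_def)
qed

lemma transport_twist_mult:
  assumes a: "a \<in> K_set \<Gamma> \<omega>'" "a' \<in> K_set \<Gamma> \<omega>'" and v: "v \<in> thompsonV_set" "w \<in> thompsonV_set"
  shows "transport \<Gamma> \<omega> (v \<circ> w) (twist (\<lambda>u. a u \<otimes> V_act \<Gamma> \<omega>' v a' u))
    = (\<lambda>u. transport \<Gamma> \<omega> v (twist a) u \<otimes> V_act \<Gamma> \<omega> v (transport \<Gamma> \<omega> w (twist a')) u)"
    (is "transport \<Gamma> \<omega> (v \<circ> w) (twist ?A) = ?B")
proof -
  note pr = thompsonV_prefix_replacement[OF v(1)] thompsonV_prefix_replacement[OF v(2)]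
  note twisted = omega_funcset pr(1) twist_coherent_pairs[OF a(1)]
  note twisted' = omega_funcset pr(2) twist_coherent_pairs[OF a(2)]
  define T where "T = transport \<Gamma> \<omega> w (twist a')"
  have T: "T \<in> K_set \<Gamma> \<omega>" "\<And>x y. maps_cone w x y \<Longrightarrow> T y = twist a' x y"
    unfolding T_def using transport_in_K_set[OF twisted'] transport_maps_cone[OF twisted'] by auto
  have A: "?A \<in> K_set \<Gamma> \<omega>'"
    by (rule K_set_mult_closed[OF is_group omega'_hom a(1) V_act_in_K_set[OF omega'_funcset v(1) a(2)]])
  have B: "?B \<in> K_set \<Gamma> \<omega>"
    unfolding T_def[symmetric]
    by (rule K_set_mult_closed[OF is_group omega_hom transport_in_K_set[OF twisted]
          V_act_in_K_set[OF omega_funcset v(1) T(1)]])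
  obtain N where
    N: "\<And>x z. N \<le> length z \<Longrightarrow> maps_cone (v \<circ> w) x z \<Longrightarrow> \<exists>y. maps_cone w x y \<and> maps_cone v y z"
    using maps_cone_comp_split[OF pr] by blast
  show ?thesis
  proof (rule transport_eqI[OF omega_funcset prefix_replacement_comp[OF pr] twist_coherent_pairs[OF A] B,
        where N = N])
    fix x z
    assume "N \<le> length z" "maps_cone (v \<circ> w) x z"
    then obtain y where xy: "maps_cone w x y" and yz: "maps_cone v y z" using N by blast
    have "?B z = twist a y z \<otimes> twist a' x y"
      unfolding T_def[symmetric]
      using transport_maps_cone[OF twisted yz] V_act_maps_cone[OF omega_funcset v(1) T(1) yz] T(2)[OF xy]
      by simp
    also have "\<dots> = twist ?A x z"
      using V_act_maps_cone[OF omega'_funcset v(1) a(2) yz] K_set_carrier[OF a(1)] K_set_carrier[OF a(2)]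
      by (simp add: twist_def m_assoc flip: m_assoc[of "c y" "inv (c y)"])
    finally show "?B z = twist ?A x z" .
  qed
qed

lemma twisting_map_mult:
  assumes "p \<in> carrier (G_grp \<Gamma> \<omega>')" "q \<in> carrier (G_grp \<Gamma> \<omega>')"
  shows "twisting_map (p \<otimes>\<^bsub>G_grp \<Gamma> \<omega>'\<^esub> q) = twisting_map p \<otimes>\<^bsub>G_grp \<Gamma> \<omega>\<^esub> twisting_map q"
proof -
  obtain a v a' w where "p = (a, v)" "q = (a', w)"
    and "a \<in> K_set \<Gamma> \<omega>'" "a' \<in> K_set \<Gamma> \<omega>'" "v \<in> thompsonV_set" "w \<in> thompsonV_set"
    using assms by auto
  then show ?thesis by (simp add: mult_G_grp twisting_map_def transport_twist_mult)
qed

lemma twisting_map_iso: "twisting_map \<in> iso (G_grp \<Gamma> \<omega>') (G_grp \<Gamma> \<omega>)"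
proof (rule isoI)
  show "twisting_map \<in> hom (G_grp \<Gamma> \<omega>') (G_grp \<Gamma> \<omega>)"
    by (intro homI twisting_map_carrier twisting_map_mult)
  show "bij_betw twisting_map (carrier (G_grp \<Gamma> \<omega>')) (carrier (G_grp \<Gamma> \<omega>))"
    by (rule bij_betw_byWitness[where f' = untwisting_map])
      (use twisting_map_carrier untwisting_map_carrier untwisting_twisting_map twisting_untwisting_map
        in blast)+
qed

end

theorem mainTheorem15:
  fixes \<Gamma> :: "('g, 'm) monoid_scheme" and \<omega> :: "'g \<times> 'g \<Rightarrow> 'g" and h :: 'g
  assumes "group \<Gamma>"
    and "\<omega> \<in> hom (\<Gamma> \<times>\<times> \<Gamma>) \<Gamma>"
    and "\<omega> ` carrier (\<Gamma> \<times>\<times> \<Gamma>) = carrier \<Gamma>"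
    and "h \<in> carrier \<Gamma>"
  shows "G_grp \<Gamma> (ad \<Gamma> h \<circ> \<omega>) \<cong> G_grp \<Gamma> \<omega>"
proof -
  obtain c where c: "\<And>u. c u \<in> carrier \<Gamma>" "\<And>u. c u = h \<otimes>\<^bsub>\<Gamma>\<^esub> \<omega> (c (u @ [False]), c (u @ [True]))"
    using twisting_labelling_exists[OF assms(1,3,4)] by blast
  interpret twisting_labelling \<Gamma> \<omega> h c
    by (intro twisting_labelling.intro twisting_labelling_axioms.intro assms c)
  show ?thesis by (rule is_isoI[OF twisting_map_iso])
qed

end
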